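(* In the changepoint model of the context, for $0<i<n$, $$P(X_i\in\cdot\mid Y_{1:n}=y_{1:n})=P(X_{i+1}\in\cdot\mid Y_{1:n}=y_{1:n})-\sum_{\ell=i+1}^{n-1}H_{i+1,\ell}\,\tilde c_{i+1,\ell}\,\tilde q_{\ell+1}-H_{i+1,n}\,\tilde c_{i+1,n}+\sum_{\ell=0}^{i}H_{\ell i}\,\tilde c_{\ell i}\,\tilde q_{i+1}.$$
   Context: Model: Let $n\ge 1$ and fix observed data $y_1,\dots,y_n$. Let $(\mathbb X,\mathcal X)$, $(\mathbb Y,\mathcal Y)$ be standard Borel spaces, $\psi$ a $\sigma$-finite measure on $(\mathbb Y,\mathcal Y)$, $\mathcal J$ a probability measure on $(\mathbb X,\mathcal X)$, and $q_{ji}\in[0,1]$ for $0\le j<i\le n$. The model consists of random variables $C_i\in\{0,\dots,i\}$, $X_i\in\mathbb X$, $Y_i\in\mathbb Y$, $i=1,\dots,n$, with joint law factorizing as: $P(C_1=0)=q_{01}$, $P(C_1=1)=1-q_{01}$; for $i\ge2$, $C_i$ depends on the past only through $C_{i-1}$, with $P(C_i=j\mid C_{i-1}=j)=q_{ji}$ and $P(C_i=i\mid C_{i-1}=j)=1-q_{ji}$ ($0\le j\le i-1$); $X_1\sim\mathcal J$ independent of $C_1$; for $i\ge 2$, $X_i$ depends on the past only through $(C_i,X_{i-1})$, with $X_i\sim\mathcal J$ if $C_i=i$ and $X_i=X_{i-1}$ if $C_i<i$; $Y_i$ depends on all other variables only through $X_i$, with density $p(Y_i=y\mid X_i=x)$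 w.r.t. $\psi$. Assume $\int\prod_{\ell=j}^i p(Y_\ell=y_\ell\mid X_\ell=x)\,\mathcal J(dx)>0$ for all $0<j\le i\le n$. $Y_{a:b}=y_{a:b}$ abbreviates $Y_a=y_a,\dots,Y_b=y_b$. Notation: $H_{ji}=P(X_i\in\cdot\mid C_i=j,Y_{1:i}=y_{1:i})$; $\tilde c_{ji}=P(C_i=j\mid C_{i+1}=i+1,Y_{1:i}=y_{1:i})$ for $0<i<n$, and $\tilde c_{jn}=P(C_n=j\mid Y_{1:n}=y_{1:n})$; $\tilde q_i=P(C_i=i\mid Y_{1:n}=y_{1:n})$. *)

theory Defs
  imports "HOL-Probability.Probability"
begin

text \<open>Paths of the changepoint indicator C_1..C_k are
  extensional functions on {1..k} with C_i in {0..i}.  The parameters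
  (J, q, p, y) are: the prior/innovation law J of X, the persistence
  probabilities q j i, the observation density p x y (density of Y_l at y
  given X_l = x w.r.t. psi), and the fixed observed data y.\<close>

definition cp_paths :: "nat \<Rightarrow> (nat \<Rightarrow> nat) set" where
  "cp_paths k = PiE {1..k} (\<lambda>i. {0..i})"

fun cp_prior :: "(nat \<Rightarrow> nat \<Rightarrow> real) \<Rightarrow> nat \<Rightarrow> (nat \<Rightarrow> nat) \<Rightarrow> real" where
  "cp_prior q 0 c = 1"
| "cp_prior q (Suc k) c = cp_prior q k c *
     (if k = 0 then (if c 1 = 0 then q 0 1 else if c 1 = 1 then 1 - q 0 1 else 0)
      else (if c (Suc k) = c k then q (c k) (Suc k)
            else if c (Suc k) = Suc k then 1 - q (c k) (Suc k) else 0))"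

text \<open>Joint law of (C_{1:k}, X_{1:k}) and observations: X_l = Z_(C_l) with
  Z_0, ..., Z_k i.i.d. with law J (a fresh draw whenever C_l = l, otherwise
  X_l = X_(l-1)).  cp_joint k m E is the joint density (w.r.t. psi^m) at
  y_{1:m} of the event E on (C_{1:k}, X_{1:k}) together with Y_{1:m} = y_{1:m}
  (m <= k), i.e. P(E, Y_{1:m} = y_{1:m}).\<close>
definition cp_joint ::
  "'x measure \<Rightarrow> (nat \<Rightarrow> nat \<Rightarrow> real) \<Rightarrow> ('x \<Rightarrow> 'y \<Rightarrow> real) \<Rightarrow> (nat \<Rightarrow> 'y) \<Rightarrow>
   nat \<Rightarrow> nat \<Rightarrow> ((nat \<Rightarrow> nat) \<Rightarrow> (nat \<Rightarrow> 'x) \<Rightarrow> bool) \<Rightarrow> real" where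
  "cp_joint J q p y k m E =
     (\<Sum>c\<in>cp_paths k. cp_prior q k c *
        (\<integral>z. (if E c (\<lambda>l. z (c l)) then 1 else 0) * (\<Prod>l\<in>{1..m}. p (z (c l)) (y l))
           \<partial>(PiM {0..k} (\<lambda>_. J))))"

definition cp_cond ::
  "'x measure \<Rightarrow> (nat \<Rightarrow> nat \<Rightarrow> real) \<Rightarrow> ('x \<Rightarrow> 'y \<Rightarrow> real) \<Rightarrow> (nat \<Rightarrow> 'y) \<Rightarrow>
   nat \<Rightarrow> nat \<Rightarrow> ((nat \<Rightarrow> nat) \<Rightarrow> (nat \<Rightarrow> 'x) \<Rightarrow> bool) \<Rightarrow>
   ((nat \<Rightarrow> nat) \<Rightarrow> (nat \<Rightarrow> 'x) \<Rightarrow> bool) \<Rightarrow> real" where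
  "cp_cond J q p y k m E F =
     cp_joint J q p y k m (\<lambda>c x. E c x \<and> F c x) / cp_joint J q p y k m F"

definition cp_postX where
  "cp_postX J q p y n i A = cp_cond J q p y n n (\<lambda>c x. x i \<in> A) (\<lambda>_ _. True)"

definition cp_H where
  "cp_H J q p y j i A = cp_cond J q p y i i (\<lambda>c x. x i \<in> A) (\<lambda>c x. c i = j)"

definition cp_ct where
  "cp_ct J q p y n j i =
     (if i < n then cp_cond J q p y (Suc i) i (\<lambda>c x. c i = j) (\<lambda>c x. c (Suc i) = Suc i)
      else cp_cond J q p y n n (\<lambda>c x. c n = j) (\<lambda>_ _. True))"

definition cp_qt where
  "cp_qt J q p y n i = cp_cond J q p y n n (\<lambda>c x. c i = i) (\<lambda>_ _. True)"

end

theory Submission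
  imports Defs
begin

text \<open>Given the path c of the changepoint indicators, X_l = Z_(c l) for i.i.d. Z_0, Z_1, ...
  with law J, so the likelihood of a path factorises over its blocks {l. c l = j}, which are
  intervals. Since C_t = t draws a fresh Z_t, no block straddles a changepoint, and the joint law
  of a past event together with C_t = t splits into a past and a future factor. This turns each
  product H_(j,l) c_(j,l) q_(l+1) into the single posterior probability
  P(X_l in A, C_l = j, C_(l+1) = l+1 | Y_(1:n)), and H_(j,n) c_(j,n) into P(X_n in A, C_n = j | Y_(1:n)).
  The identity then holds path by path: either C_(i+1) = C_i, so X_(i+1) = X_i and all correction
  terms vanish, or block i+1 starts at i+1 and ends at exactly one l in [i+1, n]; the term of that l
  cancels X_(i+1), and the last sum restores X_i.\<close>

lemma sum_PiE_Un_mult: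
  fixes f g :: "('a \<Rightarrow> 'b) \<Rightarrow> 'c :: semiring_0"
  assumes "I \<inter> K = {}"
    and "\<And>c c'. (\<And>i. i \<in> I \<Longrightarrow> c i = c' i) \<Longrightarrow> f c = f c'"
    and "\<And>c c'. (\<And>i. i \<in> K \<Longrightarrow> c i = c' i) \<Longrightarrow> g c = g c'"
  shows "(\<Sum>c\<in>PiE (I \<union> K) S. f c * g c) = (\<Sum>c\<in>PiE I S. f c) * (\<Sum>d\<in>PiE K S. g d)"
proof -
  have "(\<Sum>c\<in>PiE (I \<union> K) S. f c * g c) = (\<Sum>(a, b)\<in>PiE I S \<times> PiE K S. f a * g b)"
  proof (rule sum.reindex_bij_witness[where i = "merge I K" and j = "\<lambda>c. (restrict c I, restrict c K)"])
    fix c assume c: "c \<in> PiE (I \<union> K) S"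
    then show "merge I K (restrict c I, restrict c K) = c" by simp
    show "(restrict c I, restrict c K) \<in> PiE I S \<times> PiE K S" using c by auto
    have "f (restrict c I) = f c" "g (restrict c K) = g c" by (auto intro: assms(2,3))
    then show "(case (restrict c I, restrict c K) of (a, b) \<Rightarrow> f a * g b) = f c * g c" by simp
  next
    fix ab assume "ab \<in> PiE I S \<times> PiE K S"
    then show "(restrict (merge I K ab) I, restrict (merge I K ab) K) = ab"
      and "merge I K ab \<in> PiE (I \<union> K) S"
      using assms(1) by (auto simp: PiE_iff)
  qed
  then show ?thesis by (simp add: sum_product sum.cartesian_product)
qed

definition cp_trans :: "(nat \<Rightarrow> nat \<Rightarrow> real) \<Rightarrow> (nat \<Rightarrow> nat) \<Rightarrow> nat \<Rightarrow> real" where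
  "cp_trans q c s =
     (if s = 1 then (if c 1 = 0 then q 0 1 else if c 1 = 1 then 1 - q 0 1 else 0)
      else if c s = c (s - 1) then q (c (s - 1)) s
      else if c s = s then 1 - q (c (s - 1)) s else 0)"

lemma cp_prior_eq_prod: "cp_prior q k c = (\<Prod>s\<in>{1..k}. cp_trans q c s)"
proof (induction k)
  case (Suc k)
  have "{1..Suc k} = insert (Suc k) {1..k}" by auto
  then show ?case using Suc by (simp add: cp_trans_def mult.commute)
qed simp

lemma cp_prior_split:
  assumes "1 \<le> t" "t \<le> k"
  shows "cp_prior q k c = cp_prior q (t - 1) c * cp_trans q c t * (\<Prod>s\<in>{t + 1..k}. cp_trans q c s)"
proof -
  have "{1..k} = {1..t - 1} \<union> insert t {t + 1..k}" using assms by auto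
  moreover have "prod (cp_trans q c) ({1..t - 1} \<union> insert t {t + 1..k})
      = prod (cp_trans q c) {1..t - 1} * (cp_trans q c t * prod (cp_trans q c) {t + 1..k})"
    by (subst prod.union_disjoint) auto
  ultimately show ?thesis
    unfolding cp_prior_eq_prod by (simp add: mult.assoc)
qed

lemma cp_trans_cong:
  "c s = c' s \<Longrightarrow> (s \<noteq> 1 \<Longrightarrow> c (s - 1) = c' (s - 1)) \<Longrightarrow> cp_trans q c s = cp_trans q c' s"
  by (cases "s = 1") (simp_all add: cp_trans_def)

lemma cp_prior_cong:
  assumes "\<And>s. s \<in> {1..k} \<Longrightarrow> c s = c' s"
  shows "cp_prior q k c = cp_prior q k c'"
  unfolding cp_prior_eq_prod
proof (intro prod.cong refl cp_trans_cong)
  fix s assume s: "s \<in> {1..k}"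
  then show "c s = c' s" by (rule assms)
  assume "s \<noteq> 1"
  then have "s - 1 \<in> {1..k}" using s by auto
  then show "c (s - 1) = c' (s - 1)" by (rule assms)
qed

lemma cp_paths_le: "c \<in> cp_paths k \<Longrightarrow> s \<in> {1..k} \<Longrightarrow> c s \<le> s"
  unfolding cp_paths_def by (auto simp: PiE_iff)

lemma cp_prior_nonneg:
  assumes "c \<in> cp_paths k" and "\<And>j s. j < s \<Longrightarrow> s \<le> k \<Longrightarrow> 0 \<le> q j s \<and> q j s \<le> 1"
  shows "0 \<le> cp_prior q k c"
  unfolding cp_prior_eq_prod
proof (rule prod_nonneg)
  fix s assume s: "s \<in> {1..k}"
  show "0 \<le> cp_trans q c s"
  proof (cases "s = 1")
    case True
    then show ?thesis using assms(2)[of 0 1] s by (auto simp: cp_trans_def)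
  next
    case False
    then have "s - 1 \<in> {1..k}" using s by auto
    then have "c (s - 1) < s" using cp_paths_le[OF assms(1), of "s - 1"] by auto
    then show ?thesis using assms(2)[of "c (s - 1)" s] s False by (auto simp: cp_trans_def)
  qed
qed

lemma cp_prior_nonzero_step:
  assumes "cp_prior q k c \<noteq> 0" "2 \<le> s" "s \<le> k"
  shows "c s = c (s - 1) \<or> c s = s"
proof -
  have "cp_trans q c s \<noteq> 0" using assms by (auto simp: cp_prior_eq_prod)
  then show ?thesis using assms(2) by (auto simp: cp_trans_def split: if_splits)
qed

lemma cp_prior_nonzero_same_block:
  assumes "cp_prior q k c \<noteq> 0" "l \<le> k" "c l = j" "1 \<le> l'" "j \<le> l'" "l' \<le> l"
  shows "c l' = j"
  using \<open>l' \<le> l\<close> \<open>c l = j\<close>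
proof (induction l' rule: inc_induct)
  case (step s)
  have "c (Suc s) \<noteq> Suc s" using step assms(5) by auto
  then show ?case
    using cp_prior_nonzero_step[OF assms(1), of "Suc s"] step assms by auto
qed

lemma cp_block_eq_interval:
  assumes "c \<in> cp_paths k" "cp_prior q k c \<noteq> 0" "m \<le> k" "{l\<in>{1..m}. c l = j} \<noteq> {}"
  obtains e where "max 1 j \<le> e" "e \<le> m" "{l\<in>{1..m}. c l = j} = {max 1 j..e}"
proof -
  define e where "e = Max {l\<in>{1..m}. c l = j}"
  have "e \<in> {l\<in>{1..m}. c l = j}" unfolding e_def using assms(4) by (intro Max_in) auto
  then have e: "c e = j" "1 \<le> e" "e \<le> m" by auto
  then have "j \<le> e" using cp_paths_le[OF assms(1), of e] assms(3) by auto
  have "{l\<in>{1..m}. c l = j} = {max 1 j..e}"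
  proof (intro set_eqI iffI)
    fix l assume l: "l \<in> {l\<in>{1..m}. c l = j}"
    then have "l \<le> e" unfolding e_def by simp
    moreover have "j \<le> l" using cp_paths_le[OF assms(1), of l] l assms(3) by auto
    ultimately show "l \<in> {max 1 j..e}" using l by auto
  next
    fix l assume "l \<in> {max 1 j..e}"
    then show "l \<in> {l\<in>{1..m}. c l = j}"
      using cp_prior_nonzero_same_block[OF assms(2), of e j l] e assms(3) by auto
  qed
  then show ?thesis using that \<open>j \<le> e\<close> e(2,3) by simp
qed

text \<open>The indicator of C_l = i+1 drops exactly where block i+1 ends, so the first sum telescopes.\<close>

lemma cp_path_telescope:
  fixes V :: "nat \<Rightarrow> real"
  assumes c: "c \<in> cp_paths n" "cp_prior q n c \<noteq> 0" and i: "0 < i" "i < n"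
  shows "V (c i) = V (c (i + 1))
     - (\<Sum>l = i + 1..n - 1. if c l = i + 1 \<and> c (l + 1) = l + 1 then V (c l) else 0)
     - (if c n = i + 1 then V (c n) else 0)
     + (\<Sum>l = 0..i. if c i = l \<and> c (i + 1) = i + 1 then V (c i) else 0)"
proof -
  define a where "a l = (if c l = i + 1 then 1 else 0 :: real)" for l
  have ends: "(if c l = i + 1 \<and> c (l + 1) = l + 1 then V (c l) else 0) = (a l - a (l + 1)) * V (i + 1)"
    if l: "l \<in> {i + 1..n - 1}" for l
  proof (cases "c l = i + 1")
    case True
    then have "c (l + 1) = i + 1 \<or> c (l + 1) = l + 1"
      using cp_prior_nonzero_step[OF c(2), of "l + 1"] l by auto
    then show ?thesis using True l by (auto simp: a_def)
  next
    case False
    have "l + 1 \<le> n" "i + 1 \<le> l" using l i by auto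
    then have "c (l + 1) \<noteq> i + 1"
      using cp_prior_nonzero_same_block[OF c(2), of "l + 1" "i + 1" l] False by auto
    then show ?thesis using False by (simp add: a_def)
  qed
  have "(\<Sum>l = i + 1..n - 1. if c l = i + 1 \<and> c (l + 1) = l + 1 then V (c l) else 0)
      = (\<Sum>l = i + 1..n - 1. (- a (Suc l)) - (- a l)) * V (i + 1)"
    unfolding sum_distrib_right by (intro sum.cong refl) (use ends in simp)
  also have "\<dots> = (a (i + 1) - a n) * V (i + 1)"
    using sum_Suc_diff[of "i + 1" "n - 1" "\<lambda>l. - a l"] i by simp
  finally have first: "(\<Sum>l = i + 1..n - 1. if c l = i + 1 \<and> c (l + 1) = l + 1 then V (c l) else 0)
      = (a (i + 1) - a n) * V (i + 1)" .
  have "c i \<le> i" using cp_paths_le[OF c(1), of i] i by auto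
  then have last: "(\<Sum>l = 0..i. if c i = l \<and> c (i + 1) = i + 1 then V (c i) else 0) = a (i + 1) * V (c i)"
    by (simp add: a_def sum.delta')
  have "(if c n = i + 1 then V (c n) else 0) = a n * V (i + 1)" by (simp add: a_def)
  moreover have "c (i + 1) = c i" if "a (i + 1) = 0"
    using that cp_prior_nonzero_step[OF c(2), of "i + 1"] i by (auto simp: a_def)
  moreover have "a (i + 1) = 0 \<or> a (i + 1) = 1 \<and> c (i + 1) = i + 1" by (simp add: a_def)
  ultimately show ?thesis unfolding first last by (auto simp: algebra_simps)
qed

lemma sum_cp_path_telescope:
  fixes W :: "(nat \<Rightarrow> nat) \<Rightarrow> nat \<Rightarrow> real"
  assumes i: "0 < i" "i < n"
  shows "(\<Sum>c\<in>cp_paths n. cp_prior q n c * W c (c i)) = (\<Sum>c\<in>cp_paths n. cp_prior q n c * W c (c (i + 1)))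
     - (\<Sum>l = i + 1..n - 1. \<Sum>c\<in>cp_paths n.
          cp_prior q n c * (if c l = i + 1 \<and> c (l + 1) = l + 1 then W c (c l) else 0))
     - (\<Sum>c\<in>cp_paths n. cp_prior q n c * (if c n = i + 1 then W c (c n) else 0))
     + (\<Sum>l = 0..i. \<Sum>c\<in>cp_paths n.
          cp_prior q n c * (if c i = l \<and> c (i + 1) = i + 1 then W c (c i) else 0))"
proof -
  let ?P = "cp_prior q n"
  have "(\<Sum>c\<in>cp_paths n. ?P c * W c (c i)) = (\<Sum>c\<in>cp_paths n. ?P c * W c (c (i + 1))
      - (\<Sum>l = i + 1..n - 1. ?P c * (if c l = i + 1 \<and> c (l + 1) = l + 1 then W c (c l) else 0))
      - ?P c * (if c n = i + 1 then W c (c n) else 0)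
      + (\<Sum>l = 0..i. ?P c * (if c i = l \<and> c (i + 1) = i + 1 then W c (c i) else 0)))"
  proof (intro sum.cong refl)
    fix c assume c: "c \<in> cp_paths n"
    show "?P c * W c (c i) = ?P c * W c (c (i + 1))
      - (\<Sum>l = i + 1..n - 1. ?P c * (if c l = i + 1 \<and> c (l + 1) = l + 1 then W c (c l) else 0))
      - ?P c * (if c n = i + 1 then W c (c n) else 0)
      + (\<Sum>l = 0..i. ?P c * (if c i = l \<and> c (i + 1) = i + 1 then W c (c i) else 0))"
    proof (cases "?P c = 0")
      case False
      show ?thesis
        using arg_cong[OF cp_path_telescope[OF c False i, of "W c"], of "\<lambda>v. ?P c * v"]
        by (simp only: sum_distrib_left right_diff_distrib distrib_left)
    qed simp
  qed
  then show ?thesis by (simp only: sum_subtractf sum.distrib sum.swap[of _ "cp_paths n"])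
qed

lemma cp_joint_path_event:
  assumes "a \<in> {1..k}"
  shows "cp_joint J q p y k m (\<lambda>c x. \<Phi> c) = cp_joint J q p y k m (\<lambda>c x. \<Phi> c \<and> x a \<in> space J)"
  unfolding cp_joint_def
proof (intro sum.cong refl)
  fix c assume c: "c \<in> cp_paths k"
  have "z (c a) \<in> space J" if "z \<in> space (PiM {0..k} (\<lambda>_. J))" for z
    using that cp_paths_le[OF c, of a] assms by (auto simp: space_PiM PiE_iff)
  then show "cp_prior q k c * (\<integral>z. (if \<Phi> c then 1 else 0) * (\<Prod>l\<in>{1..m}. p (z (c l)) (y l)) \<partial>PiM {0..k} (\<lambda>_. J)) =
      cp_prior q k c * (\<integral>z. (if \<Phi> c \<and> z (c a) \<in> space J then 1 else 0) * (\<Prod>l\<in>{1..m}. p (z (c l)) (y l)) \<partial>PiM {0..k} (\<lambda>_. J))"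
    by (intro arg_cong2[where f = "(*)"] refl Bochner_Integration.integral_cong) simp_all
qed

locale changepoint_model = J: prob_space J
  for J :: "'x measure" and q :: "nat \<Rightarrow> nat \<Rightarrow> real" and p :: "'x \<Rightarrow> 'y \<Rightarrow> real"
    and y :: "nat \<Rightarrow> 'y" and n :: nat +
  assumes q_bounds: "\<And>j i. j < i \<Longrightarrow> i \<le> n \<Longrightarrow> 0 \<le> q j i \<and> q j i \<le> 1"
    and lik_nonneg: "\<And>x l. x \<in> space J \<Longrightarrow> l \<in> {1..n} \<Longrightarrow> 0 \<le> p x (y l)"
    and lik_integrable:
      "\<And>j i. 0 < j \<Longrightarrow> j \<le> i \<Longrightarrow> i \<le> n \<Longrightarrow> integrable J (\<lambda>x. \<Prod>l\<in>{j..i}. p x (y l))"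
begin

abbreviation joint where "joint \<equiv> cp_joint J q p y"

text \<open>The times l with c l = j form block j of the path c; they all observe the same Z_j.\<close>

definition block_lik :: "nat \<Rightarrow> (nat \<Rightarrow> nat) \<Rightarrow> 'x set \<Rightarrow> nat \<Rightarrow> nat \<Rightarrow> real" where
  "block_lik m c A v j =
     (\<integral>x. (if j = v then indicator A x else 1) * (\<Prod>l\<in>{l\<in>{1..m}. c l = j}. p x (y l)) \<partial>J)"

lemma block_lik_cong:
  assumes "\<And>l. l \<in> {1..m} \<Longrightarrow> c l = c' l"
  shows "block_lik m c A v j = block_lik m c' A v j"
proof -
  have "{l\<in>{1..m}. c l = j} = {l\<in>{1..m}. c' l = j}" using assms by auto
  then show ?thesis by (simp add: block_lik_def)
qed

lemma block_integrable:
  assumes "c \<in> cp_paths k" "cp_prior q k c \<noteq> 0" "k \<le> n" "m \<le> k"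
  shows "integrable J (\<lambda>x. \<Prod>l\<in>{l\<in>{1..m}. c l = j}. p x (y l))"
proof (cases "{l\<in>{1..m}. c l = j} = {}")
  case False
  then obtain e where "max 1 j \<le> e" "e \<le> m" "{l\<in>{1..m}. c l = j} = {max 1 j..e}"
    using cp_block_eq_interval[OF assms(1,2,4)] by blast
  then show ?thesis using lik_integrable[of "max 1 j" e] assms(3,4) by simp
next
  case True
  then show ?thesis unfolding True by simp
qed

lemma block_integrand_integrable:
  assumes "c \<in> cp_paths k" "cp_prior q k c \<noteq> 0" "k \<le> n" "m \<le> k" "A \<in> sets J"
  shows "integrable J (\<lambda>x. (if j = v then indicator A x else 1) * (\<Prod>l\<in>{l\<in>{1..m}. c l = j}. p x (y l)))"
  using integrable_real_mult_indicator[OF assms(5) block_integrable[OF assms(1-4)]]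
    block_integrable[OF assms(1-4)]
  by (cases "j = v") (simp_all add: mult.commute)

lemma block_lik_nonneg:
  assumes "c \<in> cp_paths k" "k \<le> n" "m \<le> k"
  shows "0 \<le> block_lik m c A v j"
  unfolding block_lik_def
proof (rule Bochner_Integration.integral_nonneg)
  fix x assume "x \<in> space J"
  then have "0 \<le> (\<Prod>l\<in>{l\<in>{1..m}. c l = j}. p x (y l))"
    using assms(2,3) lik_nonneg by (intro prod_nonneg) auto
  then show "0 \<le> (if j = v then indicator A x else 1) * (\<Prod>l\<in>{l\<in>{1..m}. c l = j}. p x (y l))"
    by simp
qed

lemma block_lik_mono:
  assumes "c \<in> cp_paths k" "cp_prior q k c \<noteq> 0" "k \<le> n" "m \<le> k" "A \<in> sets J"
  shows "block_lik m c A v j \<le> block_lik m c (space J) v j"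
  unfolding block_lik_def
proof (rule integral_mono)
  fix x assume "x \<in> space J"
  moreover have "0 \<le> (\<Prod>l\<in>{l\<in>{1..m}. c l = j}. p x (y l))"
    using calculation assms(3,4) lik_nonneg by (intro prod_nonneg) auto
  ultimately show "(if j = v then indicator A x else 1) * (\<Prod>l\<in>{l\<in>{1..m}. c l = j}. p x (y l))
      \<le> (if j = v then indicator (space J) x else 1) * (\<Prod>l\<in>{l\<in>{1..m}. c l = j}. p x (y l))"
    by (auto simp: indicator_def)
qed (use block_integrand_integrable[OF assms] block_integrand_integrable[OF assms(1-4)] in auto)

lemma integral_eq_prod_block_lik:
  assumes "c \<in> cp_paths k" "cp_prior q k c \<noteq> 0" "k \<le> n" "m \<le> k" "a \<in> {1..k}" "A \<in> sets J"
  shows "(\<integral>z. (if z (c a) \<in> A then 1 else 0) * (\<Prod>l\<in>{1..m}. p (z (c l)) (y l)) \<partial>PiM {0..k} (\<lambda>_. J))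
    = (\<Prod>j\<in>{0..k}. block_lik m c A (c a) j)"
proof -
  interpret product_sigma_finite "\<lambda>_ :: nat. J"
    by (simp add: product_sigma_finite_def J.sigma_finite_measure_axioms)
  define f where
    "f j x = (if j = c a then indicator A x else 1) * (\<Prod>l\<in>{l\<in>{1..m}. c l = j}. p x (y l))" for j x
  have ca: "c a \<in> {0..k}" using cp_paths_le[OF assms(1,5)] assms(5) by auto
  have range: "c ` {1..m} \<subseteq> {0..k}" using cp_paths_le[OF assms(1)] assms(4) by fastforce
  have "(if z (c a) \<in> A then 1 else 0) * (\<Prod>l\<in>{1..m}. p (z (c l)) (y l)) = (\<Prod>j\<in>{0..k}. f j (z j))"
    for z
  proof -
    have "(\<Prod>j\<in>{0..k}. \<Prod>l\<in>{l\<in>{1..m}. c l = j}. p (z j) (y l))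
        = (\<Prod>j\<in>{0..k}. \<Prod>l\<in>{l\<in>{1..m}. c l = j}. p (z (c l)) (y l))"
      by (intro prod.cong refl) auto
    also have "\<dots> = (\<Prod>l\<in>{1..m}. p (z (c l)) (y l))"
      using range by (intro prod.group) auto
    finally show ?thesis
      unfolding f_def prod.distrib using ca by (simp add: prod.delta indicator_def)
  qed
  then have "(\<integral>z. (if z (c a) \<in> A then 1 else 0) * (\<Prod>l\<in>{1..m}. p (z (c l)) (y l)) \<partial>PiM {0..k} (\<lambda>_. J))
      = (\<integral>z. (\<Prod>j\<in>{0..k}. f j (z j)) \<partial>PiM {0..k} (\<lambda>_. J))"
    by simp
  also have "\<dots> = (\<Prod>j\<in>{0..k}. integral\<^sup>L J (f j))"
    unfolding f_def
    by (intro product_integral_prod block_integrand_integrable[OF assms(1-4,6)]) simp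
  finally show ?thesis by (simp add: f_def[abs_def] block_lik_def)
qed

lemma joint_eq_sum_block_lik:
  assumes "k \<le> n" "m \<le> k" "a \<in> {1..k}" "A \<in> sets J"
  shows "joint k m (\<lambda>c x. \<Phi> c \<and> x a \<in> A)
    = (\<Sum>c\<in>cp_paths k. cp_prior q k c * (if \<Phi> c then \<Prod>j\<in>{0..k}. block_lik m c A (c a) j else 0))"
  unfolding cp_joint_def
proof (intro sum.cong refl)
  fix c assume c: "c \<in> cp_paths k"
  show "cp_prior q k c * (\<integral>z. (if \<Phi> c \<and> z (c a) \<in> A then 1 else 0) * (\<Prod>l\<in>{1..m}. p (z (c l)) (y l))
      \<partial>PiM {0..k} (\<lambda>_. J)) = cp_prior q k c * (if \<Phi> c then \<Prod>j\<in>{0..k}. block_lik m c A (c a) j else 0)"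
    using integral_eq_prod_block_lik[OF c _ assms] by (cases "cp_prior q k c = 0") auto
qed

lemma joint_nonneg_le:
  assumes "k \<le> n" "m \<le> k" "a \<in> {1..k}" "A \<in> sets J" "\<And>c. \<Phi> c \<Longrightarrow> \<Psi> c"
  shows "0 \<le> joint k m (\<lambda>c x. \<Phi> c \<and> x a \<in> A)"
    and "joint k m (\<lambda>c x. \<Phi> c \<and> x a \<in> A) \<le> joint k m (\<lambda>c x. \<Psi> c)"
proof -
  let ?S = "\<lambda>\<Phi> A c. cp_prior q k c * (if \<Phi> c then \<Prod>j\<in>{0..k}. block_lik m c A (c a) j else 0)"
  have summand: "0 \<le> ?S \<Phi> A c \<and> ?S \<Phi> A c \<le> ?S \<Psi> (space J) c" if c: "c \<in> cp_paths k" for c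
  proof (cases "cp_prior q k c = 0")
    case False
    have "0 \<le> cp_prior q k c" using cp_prior_nonneg[OF c] q_bounds assms(1) by auto
    moreover have "0 \<le> (\<Prod>j\<in>{0..k}. block_lik m c A (c a) j)"
      using block_lik_nonneg[OF c assms(1,2)] by (simp add: prod_nonneg)
    moreover have "(\<Prod>j\<in>{0..k}. block_lik m c A (c a) j) \<le> (\<Prod>j\<in>{0..k}. block_lik m c (space J) (c a) j)"
      using block_lik_nonneg[OF c assms(1,2)] block_lik_mono[OF c False assms(1,2,4)]
      by (intro prod_mono) auto
    ultimately show ?thesis using assms(5) by (auto intro: mult_left_mono)
  qed simp
  note sum_eq = joint_eq_sum_block_lik[OF assms(1-3)]
  show "0 \<le> joint k m (\<lambda>c x. \<Phi> c \<and> x a \<in> A)"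
    unfolding sum_eq[OF assms(4)] using summand by (intro sum_nonneg) blast
  show "joint k m (\<lambda>c x. \<Phi> c \<and> x a \<in> A) \<le> joint k m (\<lambda>c x. \<Psi> c)"
    unfolding sum_eq[OF assms(4)] cp_joint_path_event[OF assms(3)] sum_eq[OF sets.top]
    using summand by (intro sum_mono) blast
qed

definition past_summand ::
  "nat \<Rightarrow> ((nat \<Rightarrow> nat) \<Rightarrow> bool) \<Rightarrow> nat \<Rightarrow> 'x set \<Rightarrow> (nat \<Rightarrow> nat) \<Rightarrow> real" where
  "past_summand t \<Phi> a A c = cp_prior q (t - 1) c * (1 - q (c (t - 1)) t) *
     (if \<Phi> c then \<Prod>j\<in>{0..t - 1}. block_lik (t - 1) c A (c a) j else 0)"

definition future_summand :: "nat \<Rightarrow> nat \<Rightarrow> nat \<Rightarrow> (nat \<Rightarrow> nat) \<Rightarrow> real" where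
  "future_summand k m t d = (if d t = t
     then (\<Prod>s\<in>{t + 1..k}. cp_trans q d s) * (\<Prod>j\<in>{t..k}. \<integral>x. (\<Prod>l\<in>{l\<in>{t..m}. d l = j}. p x (y l)) \<partial>J)
     else 0)"

definition past_weight :: "nat \<Rightarrow> ((nat \<Rightarrow> nat) \<Rightarrow> bool) \<Rightarrow> nat \<Rightarrow> 'x set \<Rightarrow> real" where
  "past_weight t \<Phi> a A = (\<Sum>c\<in>cp_paths (t - 1). past_summand t \<Phi> a A c)"

definition future_weight :: "nat \<Rightarrow> nat \<Rightarrow> nat \<Rightarrow> real" where
  "future_weight k m t = (\<Sum>d\<in>PiE {t..k} (\<lambda>i. {0..i}). future_summand k m t d)"

lemma past_summand_cong:
  assumes "2 \<le> t" "a \<in> {1..t - 1}" "\<And>s. s \<in> {1..t - 1} \<Longrightarrow> c s = c' s"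
    and "\<Phi> c = \<Phi> c'"
  shows "past_summand t \<Phi> a A c = past_summand t \<Phi> a A c'"
proof -
  have "c a = c' a" "c (t - 1) = c' (t - 1)" using assms(1-3) by auto
  then show ?thesis
    unfolding past_summand_def using cp_prior_cong[OF assms(3)] block_lik_cong[OF assms(3)] assms(4)
    by simp
qed

lemma future_summand_cong:
  assumes "t \<le> k" "m \<le> k" "\<And>s. s \<in> {t..k} \<Longrightarrow> d s = d' s"
  shows "future_summand k m t d = future_summand k m t d'"
proof -
  have "cp_trans q d s = cp_trans q d' s" if "s \<in> {t + 1..k}" for s
  proof -
    have "s \<in> {t..k}" "s - 1 \<in> {t..k}" using that by auto
    then show ?thesis using assms(3) by (intro cp_trans_cong) auto
  qed
  moreover have "{l\<in>{t..m}. d l = j} = {l\<in>{t..m}. d' l = j}" for j using assms by auto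
  ultimately show ?thesis unfolding future_summand_def using assms(1) assms(3)[of t] by simp
qed

lemma future_weight_without_obs:
  assumes "1 \<le> t"
  shows "future_weight t (t - 1) t = 1"
proof -
  have no_obs: "{l\<in>{t..t - 1}. d l = j} = {}" for d :: "nat \<Rightarrow> nat" and j using assms by auto
  have "future_weight t (t - 1) t = (\<Sum>d\<in>PiE {t} (\<lambda>i. {0..i}). \<Prod>s\<in>{t}. if d s = t then 1 else 0)"
    unfolding future_weight_def future_summand_def no_obs
    by (intro sum.cong) (simp_all add: J.prob_space)
  also have "\<dots> = (\<Prod>s\<in>{t}. \<Sum>v\<in>{0..s}. if v = t then 1 else 0)"
    by (rule prod_sum_PiE[symmetric]) auto
  finally show ?thesis by simp
qed

lemma prod_block_lik_split:
  assumes c: "c \<in> cp_paths k" "cp_prior q k c \<noteq> 0" "c t = t"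
    and t: "1 \<le> t" "t \<le> k" "t - 1 \<le> m" "m \<le> k" and a: "a \<in> {1..t - 1}"
  shows "(\<Prod>j\<in>{0..k}. block_lik m c A (c a) j)
    = (\<Prod>j\<in>{0..t - 1}. block_lik (t - 1) c A (c a) j)
      * (\<Prod>j\<in>{t..k}. \<integral>x. (\<Prod>l\<in>{l\<in>{t..m}. c l = j}. p x (y l)) \<partial>J)"
proof -
  have "{0..k} = {0..t - 1} \<union> {t..k}" "{0..t - 1} \<inter> {t..k} = {}" using t by auto
  then have "(\<Prod>j\<in>{0..k}. block_lik m c A (c a) j)
      = (\<Prod>j\<in>{0..t - 1}. block_lik m c A (c a) j) * (\<Prod>j\<in>{t..k}. block_lik m c A (c a) j)"
    using prod.union_disjoint[of "{0..t - 1}" "{t..k}" "block_lik m c A (c a)"] by simp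
  moreover have "block_lik m c A (c a) j = block_lik (t - 1) c A (c a) j" if j: "j \<le> t - 1" for j
  proof -
    have "l \<le> t - 1" if "l \<in> {1..m}" "c l = j" for l
    proof (rule ccontr)
      assume "\<not> l \<le> t - 1"
      then have "c t = j" using cp_prior_nonzero_same_block[OF c(2), of l j t] that j t by auto
      then show False using c(3) j t by simp
    qed
    then have "{l\<in>{1..m}. c l = j} = {l\<in>{1..t - 1}. c l = j}" using t by auto
    then show ?thesis by (simp add: block_lik_def)
  qed
  moreover have "block_lik m c A (c a) j = (\<integral>x. (\<Prod>l\<in>{l\<in>{t..m}. c l = j}. p x (y l)) \<partial>J)"
    if j: "t \<le> j" for j
  proof -
    have "c a < j" using cp_paths_le[OF c(1), of a] a j t by auto
    moreover have "{l\<in>{1..m}. c l = j} = {l\<in>{t..m}. c l = j}"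
      using cp_paths_le[OF c(1)] j t by fastforce
    ultimately show ?thesis by (simp add: block_lik_def)
  qed
  ultimately show ?thesis by simp
qed

lemma joint_summand_split:
  assumes c: "c \<in> cp_paths k" and t: "2 \<le> t" "t \<le> k" "t - 1 \<le> m" "m \<le> k" and a: "a \<in> {1..t - 1}"
  shows "cp_prior q k c * (if \<Phi> c \<and> c t = t then \<Prod>j\<in>{0..k}. block_lik m c A (c a) j else 0)
    = past_summand t \<Phi> a A c * future_summand k m t c"
proof (cases "\<Phi> c \<and> c t = t")
  case True
  have "t - 1 \<in> {1..k}" using t by auto
  then have "c (t - 1) < t" using cp_paths_le[OF c, of "t - 1"] by auto
  then have "cp_trans q c t = 1 - q (c (t - 1)) t" using True t by (simp add: cp_trans_def)
  then have prior: "cp_prior q k c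
      = cp_prior q (t - 1) c * (1 - q (c (t - 1)) t) * (\<Prod>s\<in>{t + 1..k}. cp_trans q c s)"
    using cp_prior_split[of t k q c] t by simp
  have "cp_prior q k c * (\<Prod>j\<in>{0..k}. block_lik m c A (c a) j)
      = cp_prior q k c * ((\<Prod>j\<in>{0..t - 1}. block_lik (t - 1) c A (c a) j)
        * (\<Prod>j\<in>{t..k}. \<integral>x. (\<Prod>l\<in>{l\<in>{t..m}. c l = j}. p x (y l)) \<partial>J))"
    using prod_block_lik_split[OF c _ _ _ t(2-4) a, of A] True t
    by (cases "cp_prior q k c = 0") simp_all
  then show ?thesis
    using True unfolding past_summand_def future_summand_def prior by (simp add: ac_simps)
qed (auto simp: past_summand_def future_summand_def)

lemma joint_split_at_changepoint:
  assumes t: "2 \<le> t" "t \<le> k" "k \<le> n" "t - 1 \<le> m" "m \<le> k" and a: "a \<in> {1..t - 1}" and A: "A \<in> sets J"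
    and \<Phi>: "\<And>c c'. (\<And>s. s \<in> {1..t - 1} \<Longrightarrow> c s = c' s) \<Longrightarrow> \<Phi> c = \<Phi> c'"
  shows "joint k m (\<lambda>c x. (\<Phi> c \<and> c t = t) \<and> x a \<in> A) = past_weight t \<Phi> a A * future_weight k m t"
proof -
  have ak: "a \<in> {1..k}" and index_split: "{1..k} = {1..t - 1} \<union> {t..k}" using a t by auto
  have "joint k m (\<lambda>c x. (\<Phi> c \<and> c t = t) \<and> x a \<in> A)
      = (\<Sum>c\<in>cp_paths k. past_summand t \<Phi> a A c * future_summand k m t c)"
    unfolding joint_eq_sum_block_lik[OF t(3,5) ak A]
    by (intro sum.cong refl joint_summand_split[OF _ t(1,2,4,5) a])
  also have "\<dots> = past_weight t \<Phi> a A * future_weight k m t"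
    unfolding past_weight_def future_weight_def cp_paths_def index_split
    using t a by (intro sum_PiE_Un_mult past_summand_cong future_summand_cong \<Phi>) auto
  finally show ?thesis .
qed

lemma joint_renewal:
  assumes t: "2 \<le> t" "t \<le> k" "k \<le> n" "t - 1 \<le> m" "m \<le> k" and a: "a \<in> {1..t - 1}" and A: "A \<in> sets J"
    and \<Phi>: "\<And>c c'. (\<And>s. s \<in> {1..t - 1} \<Longrightarrow> c s = c' s) \<Longrightarrow> \<Phi> c = \<Phi> c'"
  shows "joint k m (\<lambda>c x. (\<Phi> c \<and> c t = t) \<and> x a \<in> A)
    = joint t (t - 1) (\<lambda>c x. (\<Phi> c \<and> c t = t) \<and> x a \<in> A) * future_weight k m t"
  using joint_split_at_changepoint[OF t a A \<Phi>]
    joint_split_at_changepoint[of t t "t - 1", OF t(1) order.refl _ order.refl diff_le_self a A \<Phi>]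
    future_weight_without_obs t
  by simp

lemma joint_changepoint_step:
  assumes t: "2 \<le> t" "t \<le> n" and a: "a \<in> {1..t - 1}" and A: "A \<in> sets J"
  shows "joint t (t - 1) (\<lambda>c x. (c (t - 1) = j \<and> c t = t) \<and> x a \<in> A)
    = (1 - q j t) * joint (t - 1) (t - 1) (\<lambda>c x. c (t - 1) = j \<and> x a \<in> A)"
proof -
  have "t - 1 \<in> {1..t - 1}" "t - 1 \<le> n" using t by auto
  then have "joint t (t - 1) (\<lambda>c x. (c (t - 1) = j \<and> c t = t) \<and> x a \<in> A)
      = past_weight t (\<lambda>c. c (t - 1) = j) a A"
    using joint_split_at_changepoint[of t t "t - 1" a A "\<lambda>c. c (t - 1) = j"] future_weight_without_obs t a A
    by auto
  also have "\<dots> = (1 - q j t) * joint (t - 1) (t - 1) (\<lambda>c x. c (t - 1) = j \<and> x a \<in> A)"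
    unfolding past_weight_def past_summand_def sum_distrib_left
      joint_eq_sum_block_lik[OF \<open>t - 1 \<le> n\<close> order.refl a A]
    by (intro sum.cong refl) auto
  finally show ?thesis .
qed

lemma cp_ct_eq_step:
  assumes "1 \<le> l" "l < n"
  shows "cp_ct J q p y n j l
    = (1 - q j (l + 1)) * joint l l (\<lambda>c x. c l = j) / joint (l + 1) l (\<lambda>c x. c (l + 1) = l + 1)"
proof -
  define t where "t = l + 1"
  have t: "2 \<le> t" "t \<le> n" "t - 1 = l" and l: "l \<in> {1..t - 1}" "l \<in> {1..t}"
    using assms by (auto simp: t_def)
  have "joint t l (\<lambda>c x. c l = j \<and> c t = t) = (1 - q j t) * joint l l (\<lambda>c x. c l = j)"
    using cp_joint_path_event[OF l(2), of J q p y l "\<lambda>c. c l = j \<and> c t = t"]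
      cp_joint_path_event[OF l(1), of J q p y l "\<lambda>c. c l = j"]
      joint_changepoint_step[OF t(1,2) l(1) sets.top, of j] t
    by simp
  then show ?thesis unfolding cp_ct_def cp_cond_def using assms by (simp add: t_def)
qed

lemma cp_qt_eq_renewal:
  assumes "1 \<le> l" "l < n"
  shows "cp_qt J q p y n (l + 1) = joint (l + 1) l (\<lambda>c x. c (l + 1) = l + 1)
    * future_weight n n (l + 1) / joint n n (\<lambda>_ _. True)"
proof -
  define t where "t = l + 1"
  have t: "2 \<le> t" "t \<le> n" "t - 1 = l" and l: "l \<in> {1..t - 1}" "l \<in> {1..t}" "l \<in> {1..n}"
    using assms by (auto simp: t_def)
  have "joint n n (\<lambda>c x. c t = t) = joint t l (\<lambda>c x. c t = t) * future_weight n n t"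
    using cp_joint_path_event[OF l(3), of J q p y n "\<lambda>c. c t = t"]
      cp_joint_path_event[OF l(2), of J q p y l "\<lambda>c. c t = t"]
      joint_renewal[OF t(1,2) order.refl _ _ l(1) sets.top, of n "\<lambda>_. True"] t
    by simp
  then show ?thesis unfolding cp_qt_def cp_cond_def by (simp add: t_def)
qed

lemma cp_H_ct_qt_eq_joint:
  assumes l: "1 \<le> l" "l < n" and A: "A \<in> sets J"
  shows "cp_H J q p y j l A * cp_ct J q p y n j l * cp_qt J q p y n (l + 1)
    = joint n n (\<lambda>c x. (c l = j \<and> c (l + 1) = l + 1) \<and> x l \<in> A) / joint n n (\<lambda>_ _. True)"
proof -
  define t where "t = l + 1"
  have t: "2 \<le> t" "t \<le> n" "t - 1 = l" and "l \<in> {1..t - 1}" using l by (auto simp: t_def)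
  define Pa where "Pa = joint l l (\<lambda>c x. c l = j \<and> x l \<in> A)"
  define Pb where "Pb = joint l l (\<lambda>c x. c l = j)"
  define E where "E = joint t l (\<lambda>c x. (c l = j \<and> c t = t) \<and> x l \<in> A)"
  define D where "D = joint t l (\<lambda>c x. c t = t)"
  define F where "F = future_weight n n t"
  let ?Z = "joint n n (\<lambda>_ _. True)"
  have H: "cp_H J q p y j l A = Pa / Pb"
    unfolding cp_H_def cp_cond_def Pa_def Pb_def by (simp add: conj_commute)
  have R: "joint n n (\<lambda>c x. (c l = j \<and> c t = t) \<and> x l \<in> A) = E * F"
    using joint_renewal[OF t(1,2) order.refl _ _ \<open>l \<in> {1..t - 1}\<close> A, of n "\<lambda>c. c l = j"] t l
    unfolding E_def F_def by simp
  have E: "E = (1 - q j t) * Pa"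
    using joint_changepoint_step[OF t(1,2) \<open>l \<in> {1..t - 1}\<close> A, of j] t unfolding E_def Pa_def by simp
  have "0 \<le> Pa" "Pa \<le> Pb"
    using joint_nonneg_le[of l l l A "\<lambda>c. c l = j" "\<lambda>c. c l = j"] l A unfolding Pa_def Pb_def by auto
  moreover have "0 \<le> E" "E \<le> D"
    using joint_nonneg_le[of t l l A "\<lambda>c. c l = j \<and> c t = t" "\<lambda>c. c t = t"] t l A
    unfolding E_def D_def by auto
  ultimately have "Pa / Pb * ((1 - q j t) * Pb / D) * (D * F / ?Z) = E * F / ?Z"
    using E by (cases "Pb = 0 \<or> D = 0") auto
  then show ?thesis
    using cp_ct_eq_step[OF l, of j] cp_qt_eq_renewal[OF l] R
    unfolding H Pb_def D_def F_def t_def by simp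
qed

lemma cp_H_ct_last_eq_joint:
  assumes "1 \<le> n" "A \<in> sets J"
  shows "cp_H J q p y j n A * cp_ct J q p y n j n
    = joint n n (\<lambda>c x. c n = j \<and> x n \<in> A) / joint n n (\<lambda>_ _. True)"
proof -
  define R where "R = joint n n (\<lambda>c x. c n = j \<and> x n \<in> A)"
  define P where "P = joint n n (\<lambda>c x. c n = j)"
  have "0 \<le> R" "R \<le> P"
    using joint_nonneg_le[of n n n A "\<lambda>c. c n = j" "\<lambda>c. c n = j"] assms unfolding R_def P_def by auto
  moreover have "cp_H J q p y j n A * cp_ct J q p y n j n = R / P * (P / joint n n (\<lambda>_ _. True))"
    unfolding cp_H_def cp_ct_def cp_cond_def R_def P_def by (simp add: conj_commute)
  ultimately show ?thesis unfolding R_def[symmetric] by (cases "P = 0") auto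
qed

lemma joint_X_recursion:
  assumes i: "0 < i" "i < n" and A: "A \<in> sets J"
  shows "joint n n (\<lambda>c x. x i \<in> A) = joint n n (\<lambda>c x. x (i + 1) \<in> A)
     - (\<Sum>l = i + 1..n - 1. joint n n (\<lambda>c x. (c l = i + 1 \<and> c (l + 1) = l + 1) \<and> x l \<in> A))
     - joint n n (\<lambda>c x. c n = i + 1 \<and> x n \<in> A)
     + (\<Sum>l = 0..i. joint n n (\<lambda>c x. (c i = l \<and> c (i + 1) = i + 1) \<and> x i \<in> A))"
proof -
  define W where "W c v = (\<Prod>j\<in>{0..n}. block_lik n c A v j)" for c v
  have sum_eq: "joint n n (\<lambda>c x. \<Phi> c \<and> x a \<in> A)
      = (\<Sum>c\<in>cp_paths n. cp_prior q n c * (if \<Phi> c then W c (c a) else 0))"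
    if "1 \<le> a" "a \<le> n" for a \<Phi>
    unfolding W_def using joint_eq_sum_block_lik[OF order.refl order.refl _ A] that by simp
  have single: "joint n n (\<lambda>c x. x a \<in> A) = (\<Sum>c\<in>cp_paths n. cp_prior q n c * W c (c a))"
    if "1 \<le> a" "a \<le> n" for a
    using sum_eq[OF that, of "\<lambda>_. True"] by simp
  have "1 \<le> i" "i \<le> n" "1 \<le> i + 1" "i + 1 \<le> n" using i by auto
  note single = single[OF this(1,2)] single[OF this(3,4)]
  have "joint n n (\<lambda>c x. c n = i + 1 \<and> x n \<in> A)
      = (\<Sum>c\<in>cp_paths n. cp_prior q n c * (if c n = i + 1 then W c (c n) else 0))"
    using sum_eq[of n] i by simp
  moreover have "(\<Sum>l = i + 1..n - 1. joint n n (\<lambda>c x. (c l = i + 1 \<and> c (l + 1) = l + 1) \<and> x l \<in> A))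
      = (\<Sum>l = i + 1..n - 1. \<Sum>c\<in>cp_paths n.
          cp_prior q n c * (if c l = i + 1 \<and> c (l + 1) = l + 1 then W c (c l) else 0))"
    using i by (intro sum.cong refl sum_eq) auto
  moreover have "(\<Sum>l = 0..i. joint n n (\<lambda>c x. (c i = l \<and> c (i + 1) = i + 1) \<and> x i \<in> A))
      = (\<Sum>l = 0..i. \<Sum>c\<in>cp_paths n.
          cp_prior q n c * (if c i = l \<and> c (i + 1) = i + 1 then W c (c i) else 0))"
    using i by (intro sum.cong refl sum_eq) auto
  ultimately show ?thesis unfolding single by (simp only: sum_cp_path_telescope[OF i])
qed

end

theorem mainTheorem11:
  fixes J :: "'x measure" and \<Psi> :: "'y measure"
    and q :: "nat \<Rightarrow> nat \<Rightarrow> real" and p :: "'x \<Rightarrow> 'y \<Rightarrow> real"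
    and y :: "nat \<Rightarrow> 'y" and n i :: nat
  assumes "n \<ge> 1"
    and "prob_space J"
    and "sigma_finite_measure \<Psi>"
    and "\<And>j i. j < i \<Longrightarrow> i \<le> n \<Longrightarrow> 0 \<le> q j i \<and> q j i \<le> 1"
    and "case_prod p \<in> borel_measurable (J \<Otimes>\<^sub>M \<Psi>)"
    and "\<And>x v. x \<in> space J \<Longrightarrow> v \<in> space \<Psi> \<Longrightarrow> 0 \<le> p x v"
    and "\<And>x. x \<in> space J \<Longrightarrow> (\<integral>\<^sup>+ v. ennreal (p x v) \<partial>\<Psi>) = 1"
    and "\<And>l. l \<in> {1..n} \<Longrightarrow> y l \<in> space \<Psi>"
    and "\<And>j i. 0 < j \<Longrightarrow> j \<le> i \<Longrightarrow> i \<le> n \<Longrightarrow>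
           (\<integral>x. (\<Prod>l\<in>{j..i}. p x (y l)) \<partial>J) > 0"
    and "0 < i" and "i < n"
  shows "\<forall>A \<in> sets J.
     cp_postX J q p y n i A =
       cp_postX J q p y n (i + 1) A
       - (\<Sum>l = i + 1..n - 1. cp_H J q p y (i + 1) l A * cp_ct J q p y n (i + 1) l * cp_qt J q p y n (l + 1))
       - cp_H J q p y (i + 1) n A * cp_ct J q p y n (i + 1) n
       + (\<Sum>l = 0..i. cp_H J q p y l i A * cp_ct J q p y n l i * cp_qt J q p y n (i + 1))"
proof
  fix A assume A: "A \<in> sets J"
  have i: "0 < i" "i < n" by fact+
  \<comment> \<open>The hypotheses on \<Psi> only make p a density; cp_joint evaluates it at the data directly.\<close>
  have "integrable J (\<lambda>x. \<Prod>l\<in>{j..k}. p x (y l))" if "0 < j" "j \<le> k" "k \<le> n" for j k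
    using assms(9)[OF that] not_integrable_integral_eq by force
  then interpret changepoint_model J q p y n
    using assms(2,4,6,8) by (intro changepoint_model.intro changepoint_model_axioms.intro) auto
  let ?Z = "joint n n (\<lambda>_ _. True)"
  have post: "cp_postX J q p y n a A = joint n n (\<lambda>c x. x a \<in> A) / ?Z" for a
    by (simp add: cp_postX_def cp_cond_def)
  have "(\<Sum>l = i + 1..n - 1. cp_H J q p y (i + 1) l A * cp_ct J q p y n (i + 1) l * cp_qt J q p y n (l + 1))
      = (\<Sum>l = i + 1..n - 1. joint n n (\<lambda>c x. (c l = i + 1 \<and> c (l + 1) = l + 1) \<and> x l \<in> A) / ?Z)"
    using i by (intro sum.cong refl cp_H_ct_qt_eq_joint A) auto
  moreover have "(\<Sum>l = 0..i. cp_H J q p y l i A * cp_ct J q p y n l i * cp_qt J q p y n (i + 1))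
      = (\<Sum>l = 0..i. joint n n (\<lambda>c x. (c i = l \<and> c (i + 1) = i + 1) \<and> x i \<in> A) / ?Z)"
    using i by (intro sum.cong refl cp_H_ct_qt_eq_joint A) auto
  ultimately show "cp_postX J q p y n i A =
       cp_postX J q p y n (i + 1) A
       - (\<Sum>l = i + 1..n - 1. cp_H J q p y (i + 1) l A * cp_ct J q p y n (i + 1) l * cp_qt J q p y n (l + 1))
       - cp_H J q p y (i + 1) n A * cp_ct J q p y n (i + 1) n
       + (\<Sum>l = 0..i. cp_H J q p y l i A * cp_ct J q p y n l i * cp_qt J q p y n (i + 1))"
    unfolding post cp_H_ct_last_eq_joint[OF assms(1) A] joint_X_recursion[OF i A]
    by (simp only: diff_divide_distrib add_divide_distrib sum_divide_distrib)
qed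

end
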